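(* Let $m\geq 2$ and let $f=a_0+a_1z+\cdots+a_mz^m\in\mathbb{Z}[z]$ be a primitive polynomial with $a_0a_m\neq 0$. Suppose there is an index $j$ with $0\leq j\leq m-1$ such that $$|a_j|>\frac{|a_{j+1}|}{|a_m|}+\sum_{0\leq i<j}|a_i||a_m|^{j-i}+\sum_{j+1<i\leq m}|a_i||a_m|^{-(i-j)},$$ where an empty sum is $0$. Then $f$ is a product of at most $m-j$ irreducible polynomials in $\mathbb{Z}[z]$. In particular, if $j=m-1$, then $f$ is irreducible in $\mathbb{Z}[z]$.
   Context: A polynomial in $\mathbb{Z}[z]$ is primitive if the greatest common divisor of its coefficients is $1$. "$f$ is a product of at most $r$ irreducible polynomials" means that in a factorization of $f$ into irreducible elements of $\mathbb{Z}[z]$, the number of factors (counted with multiplicity) is at most $r$. *)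

theory Defs
  imports "HOL-Computational_Algebra.Computational_Algebra"
begin

end

theory Submission
  imports Defs "HOL-Complex_Analysis.Residue_Theorem"
begin

text \<open>
  On the circle \<open>|z| = r\<close> with \<open>r = 1/|a\<^sub>m|\<close> the hypothesis makes the monomial \<open>a\<^sub>j z\<^sup>j\<close>
  dominate all other terms of \<open>f\<close>, so by Rouche's theorem \<open>f\<close> has exactly \<open>j\<close> roots of
  modulus \<open>< r\<close> and hence \<open>m - j\<close> roots of modulus \<open>\<ge> r\<close>. An irreducible factor \<open>g\<close> of \<open>f\<close> is
  non-constant because \<open>f\<close> is primitive; if all its roots had modulus \<open>< r\<close>, then
  \<open>|g(0)| < |lc g| r\<^bsup>deg g\<^esup> \<le> |a\<^sub>m| r = 1\<close>, i.e. \<open>g(0) = 0\<close>, contradicting \<open>a\<^sub>0 \<noteq> 0\<close>. So every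
  irreducible factor takes at least one of the \<open>m - j\<close> outer roots.
\<close>

(* the box measure of HOL-Analysis would otherwise shadow the content of a polynomial *)
hide_const (open) Henstock_Kurzweil_Integration.content

subsection \<open>Roots of complex polynomials\<close>

lemma zorder_poly:
  fixes p :: "complex poly"
  assumes "p \<noteq> 0"
  shows "zorder (poly p) a = int (order a p)"
proof -
  obtain q where q: "p = [:-a, 1:] ^ order a p * q" and "\<not> [:-a, 1:] dvd q"
    using order_decomp[OF assms] by blast
  then have "poly q a \<noteq> 0"
    by (simp add: poly_eq_0_iff_dvd)
  then show ?thesis
  proof (intro zorder_eqI[of UNIV a "poly q"])
    show "poly p w = poly q w * (w - a) powi int (order a p)" for w
      by (subst q) simp
  qed (auto intro: holomorphic_intros)
qed

lemma size_filter_proots: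
  fixes p :: "'a::idom poly"
  assumes "p \<noteq> 0"
  shows "size (filter_mset P (proots p)) = (\<Sum>x | poly p x = 0 \<and> P x. order x p)"
proof -
  have "size (filter_mset P (proots p)) =
          sum (count (filter_mset P (proots p))) (set_mset (filter_mset P (proots p)))"
    by (rule size_multiset_overloaded_eq)
  also have "set_mset (filter_mset P (proots p)) = {x. poly p x = 0 \<and> P x}"
    using assms by auto
  also have "sum (count (filter_mset P (proots p))) {x. poly p x = 0 \<and> P x}
             = (\<Sum>x | poly p x = 0 \<and> P x. order x p)"
    using assms by (intro sum.cong) auto
  finally show ?thesis .
qed

lemma sum_winding_number_zorder_poly_circlepath:
  fixes p :: "complex poly"
  assumes p: "p \<noteq> 0" and r: "r > 0" and off_circle: "\<And>x. poly p x = 0 \<Longrightarrow> cmod x \<noteq> r"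
  shows "(\<Sum>x | poly p x = 0. winding_number (circlepath 0 r) x * of_int (zorder (poly p) x))
           = of_nat (size (filter_mset (\<lambda>x. cmod x < r) (proots p)))"
proof -
  have fin: "finite {x. poly p x = 0}"
    using p poly_roots_finite by blast
  have winding: "winding_number (circlepath 0 r) x = (if cmod x < r then 1 else 0)"
    if "poly p x = 0" for x
    using r off_circle[OF that]
    by (auto simp: winding_number_circlepath
             intro!: winding_number_zero_outside[of _ "cball 0 r"])
  have "(\<Sum>x | poly p x = 0. winding_number (circlepath 0 r) x * of_int (zorder (poly p) x))
        = (\<Sum>x | poly p x = 0. if cmod x < r then of_nat (order x p) else 0)"
    by (intro sum.cong) (auto simp: winding zorder_poly[OF p])
  also have "\<dots> = (\<Sum>x | poly p x = 0 \<and> cmod x < r. of_nat (order x p))"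
    using sum.inter_filter[OF fin, of "\<lambda>x. of_nat (order x p) :: complex" "\<lambda>x. cmod x < r"]
    by simp
  also have "\<dots> = of_nat (size (filter_mset (\<lambda>x. cmod x < r) (proots p)))"
    by (simp add: size_filter_proots[OF p])
  finally show ?thesis .
qed

lemma size_proots_in_ball_eq_Rouche:
  fixes p q :: "complex poly"
  assumes p: "p \<noteq> 0" and q: "q \<noteq> 0" and r: "r > 0"
    and dominant: "\<And>z. cmod z = r \<Longrightarrow> cmod (poly p z - poly q z) < cmod (poly q z)"
  shows "size (filter_mset (\<lambda>x. cmod x < r) (proots p))
           = size (filter_mset (\<lambda>x. cmod x < r) (proots q))"
proof -
  have fin: "finite {x. poly p x = 0}" "finite {x. poly q x = 0}"
    using p q poly_roots_finite by blast+
  have "(\<Sum>x | x \<in> UNIV \<and> poly q x + (poly p x - poly q x) = 0.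
          winding_number (circlepath 0 r) x
            * of_int (zorder (\<lambda>x. poly q x + (poly p x - poly q x)) x))
        = (\<Sum>x | x \<in> UNIV \<and> poly q x = 0.
          winding_number (circlepath 0 r) x * of_int (zorder (poly q) x))"
    by (rule Rouche_theorem) (use fin dominant r in \<open>auto intro!: holomorphic_intros\<close>)
  moreover have cancel: "poly q x + (poly p x - poly q x) = poly p x" for x
    by simp
  ultimately have "(\<Sum>x | poly p x = 0. winding_number (circlepath 0 r) x * of_int (zorder (poly p) x))
        = (\<Sum>x | poly q x = 0. winding_number (circlepath 0 r) x * of_int (zorder (poly q) x))"
    by (simp only: cancel UNIV_I simp_thms)
  moreover have "cmod x \<noteq> r" if "poly p x = 0 \<or> poly q x = 0" for x
    using dominant[of x] that by auto
  ultimately have "(of_nat (size (filter_mset (\<lambda>x. cmod x < r) (proots p))) :: complex)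
                   = of_nat (size (filter_mset (\<lambda>x. cmod x < r) (proots q)))"
    using sum_winding_number_zorder_poly_circlepath[OF p r]
      sum_winding_number_zorder_poly_circlepath[OF q r] by simp
  then show ?thesis
    using of_nat_eq_iff by blast
qed

lemma size_proots_monom_in_ball:
  fixes c :: complex
  assumes "c \<noteq> 0" and "r > 0"
  shows "size (filter_mset (\<lambda>x. cmod x < r) (proots (monom c n))) = n"
proof -
  have "filter_mset (\<lambda>x. cmod x < r) (replicate_mset n 0) = replicate_mset n 0"
    using \<open>r > 0\<close> by (induction n) simp_all
  then show ?thesis
    using \<open>c \<noteq> 0\<close> by (simp add: monom_altdef proots_power)
qed

lemma norm_prod_mset_less:
  fixes M :: "'a::real_normed_field multiset"
  assumes "M \<noteq> {#}" and "\<forall>x\<in>#M. norm x < r"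
  shows "norm (prod_mset M) < r ^ size M"
  using assms
proof (induction M)
  case (add a M)
  show ?case
  proof (cases "M = {#}")
    case False
    then have "norm (prod_mset M) < r ^ size M" and "norm a < r"
      using add by auto
    then show ?thesis
      by (auto simp: norm_mult intro!: mult_strict_mono le_less_trans[OF norm_ge_zero])
  qed (use add in simp)
qed simp

lemma norm_poly_0_less_if_roots_in_ball:
  fixes p :: "complex poly"
  assumes "degree p \<ge> 1" and "\<And>x. poly p x = 0 \<Longrightarrow> cmod x < r"
  shows "cmod (poly p 0) < cmod (lead_coeff p) * r ^ degree p"
proof -
  have p: "p \<noteq> 0"
    using assms by auto
  have "poly p 0 = lead_coeff p * prod_mset (image_mset uminus (proots p))"
    by (subst complex_poly_decompose_multiset[symmetric]) (simp add: poly_prod_mset)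
  moreover have "proots p \<noteq> {#}"
    using assms size_proots_complex[of p] by auto
  moreover have "cmod (prod_mset (image_mset uminus (proots p))) < r ^ degree p"
    using assms p \<open>proots p \<noteq> {#}\<close> norm_prod_mset_less[of "image_mset uminus (proots p)" r]
    by (auto simp: size_proots_complex)
  moreover have "lead_coeff p \<noteq> 0"
    using p by simp
  ultimately show ?thesis
    by (simp add: norm_mult)
qed

lemma norm_poly_minus_monomial_le:
  fixes p :: "'a::real_normed_field poly"
  shows "norm (poly p z - coeff p j * z ^ j)
           \<le> (\<Sum>i\<in>{..degree p} - {j}. norm (coeff p i) * norm z ^ i)"
proof -
  have "poly p z - coeff p j * z ^ j = (\<Sum>i\<in>{..degree p} - {j}. coeff p i * z ^ i)"
  proof (cases "j \<le> degree p")
    case True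
    then show ?thesis
      by (simp add: poly_altdef sum.remove)
  next
    case False
    then show ?thesis
      by (simp add: poly_altdef coeff_eq_0)
  qed
  also have "norm \<dots> \<le> (\<Sum>i\<in>{..degree p} - {j}. norm (coeff p i) * norm z ^ i)"
    by (rule norm_sum[THEN order_trans]) (simp add: norm_mult norm_power)
  finally show ?thesis .
qed

lemma map_poly_of_int_mult:
  "map_poly (of_int :: int \<Rightarrow> 'a::comm_ring_1) (p * q) = map_poly of_int p * map_poly of_int q"
  by (simp add: poly_eq_iff coeff_mult coeff_map_poly)

lemma map_poly_of_int_eq_0_iff [simp]:
  "map_poly (of_int :: int \<Rightarrow> 'a::ring_char_0) p = 0 \<longleftrightarrow> p = 0"
  by (rule map_poly_eq_0_iff) auto

subsection \<open>The dominant coefficient\<close>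

lemma sum_except_at_inverse_powers:
  fixes a :: "nat \<Rightarrow> real"
  assumes "R > 0" and "j < m"
  shows "(\<Sum>i\<in>{..m} - {j}. a i * (1 / R) ^ i)
         = (1 / R) ^ j * (a (j+1) / R + (\<Sum>i<j. a i * R ^ (j - i))
                          + (\<Sum>i\<in>{j+2..m}. a i / R ^ (i - j)))"
proof -
  have split: "{..m} - {j} = {..<j} \<union> insert (j+1) {j+2..m}"
    using assms by auto
  have below: "a i * (1 / R) ^ i = (1 / R) ^ j * (a i * R ^ (j - i))" if "i < j" for i
  proof -
    have "R ^ j = R ^ i * R ^ (j - i)"
      using that by (simp add: power_add[symmetric])
    then show ?thesis
      using assms by (simp add: field_simps)
  qed
  have above: "a i * (1 / R) ^ i = (1 / R) ^ j * (a i / R ^ (i - j))" if "j < i" for i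
  proof -
    have "(1 / R) ^ i = (1 / R) ^ j * (1 / R) ^ (i - j)"
      using that by (simp add: power_add[symmetric])
    then show ?thesis
      by (simp add: power_one_over)
  qed
  have "(\<Sum>i\<in>{..m} - {j}. a i * (1 / R) ^ i)
        = (\<Sum>i<j. a i * (1 / R) ^ i) + a (j+1) * (1 / R) ^ (j+1)
          + (\<Sum>i\<in>{j+2..m}. a i * (1 / R) ^ i)"
    unfolding split by (subst sum.union_disjoint) auto
  also have "\<dots> = (1 / R) ^ j * (a (j+1) / R + (\<Sum>i<j. a i * R ^ (j - i))
                                 + (\<Sum>i\<in>{j+2..m}. a i / R ^ (i - j)))"
    by (simp add: below above sum_distrib_left algebra_simps)
  finally show ?thesis .
qed

lemma dominant_coeff_on_circle:
  fixes f :: "int poly" and z :: complex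
  assumes deg: "degree f = m" and "j < m" and am: "coeff f m \<noteq> 0"
    and dominant: "real_of_int \<bar>coeff f j\<bar> >
           real_of_int \<bar>coeff f (j+1)\<bar> / real_of_int \<bar>coeff f m\<bar>
           + (\<Sum>i<j. real_of_int \<bar>coeff f i\<bar> * real_of_int \<bar>coeff f m\<bar> ^ (j - i))
           + (\<Sum>i\<in>{j+2..m}. real_of_int \<bar>coeff f i\<bar> / real_of_int \<bar>coeff f m\<bar> ^ (i - j))"
    and z: "cmod z = 1 / real_of_int \<bar>coeff f m\<bar>"
  shows "cmod (poly (map_poly of_int f) z - of_int (coeff f j) * z ^ j)
           < cmod (of_int (coeff f j) * z ^ j)"
proof -
  define R where "R = real_of_int \<bar>coeff f m\<bar>"
  have R: "R > 0"
    using am by (simp add: R_def)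
  have "cmod (poly (map_poly of_int f) z - of_int (coeff f j) * z ^ j)
        \<le> (\<Sum>i\<in>{..m} - {j}. real_of_int \<bar>coeff f i\<bar> * (1 / R) ^ i)"
    using norm_poly_minus_monomial_le[of "map_poly of_int f" z j] deg z
    by (simp add: degree_map_poly coeff_map_poly R_def)
  also have "\<dots> < (1 / R) ^ j * real_of_int \<bar>coeff f j\<bar>"
    using dominant R \<open>j < m\<close>
    by (simp add: sum_except_at_inverse_powers R_def add.commute add.left_commute)
  also have "\<dots> = cmod (of_int (coeff f j) * z ^ j)"
    by (simp add: norm_mult norm_power z R_def)
  finally show ?thesis .
qed

lemma size_proots_outside_ball_if_dominant_coeff:
  fixes f :: "int poly"
  assumes deg: "degree f = m" and "j < m" and am: "coeff f m \<noteq> 0"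
    and dominant: "real_of_int \<bar>coeff f j\<bar> >
           real_of_int \<bar>coeff f (j+1)\<bar> / real_of_int \<bar>coeff f m\<bar>
           + (\<Sum>i<j. real_of_int \<bar>coeff f i\<bar> * real_of_int \<bar>coeff f m\<bar> ^ (j - i))
           + (\<Sum>i\<in>{j+2..m}. real_of_int \<bar>coeff f i\<bar> / real_of_int \<bar>coeff f m\<bar> ^ (i - j))"
  defines "r \<equiv> 1 / real_of_int \<bar>coeff f m\<bar>"
  shows "size (filter_mset (\<lambda>x. \<not> cmod x < r) (proots (map_poly of_int f :: complex poly)))
           = m - j"
proof -
  define F where "F = (map_poly of_int f :: complex poly)"
  have F: "F \<noteq> 0" and degF: "degree F = m"
    using am deg by (auto simp: F_def degree_map_poly)
  have "0 \<le> real_of_int \<bar>coeff f (j+1)\<bar> / real_of_int \<bar>coeff f m\<bar>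
           + (\<Sum>i<j. real_of_int \<bar>coeff f i\<bar> * real_of_int \<bar>coeff f m\<bar> ^ (j - i))
           + (\<Sum>i\<in>{j+2..m}. real_of_int \<bar>coeff f i\<bar> / real_of_int \<bar>coeff f m\<bar> ^ (i - j))"
    by (intro add_nonneg_nonneg sum_nonneg) auto
  with dominant have "coeff f j \<noteq> 0"
    by auto
  moreover have "r > 0"
    using am by (simp add: r_def)
  ultimately have inner: "size (filter_mset (\<lambda>x. cmod x < r) (proots F)) = j"
    using size_proots_in_ball_eq_Rouche[OF F, of "monom (of_int (coeff f j)) j" r]
      size_proots_monom_in_ball[of "of_int (coeff f j)" r j]
      dominant_coeff_on_circle[OF deg \<open>j < m\<close> am dominant]
    by (simp add: F_def r_def poly_monom)
  have "m = size (proots F)"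
    using degF by (simp add: size_proots_complex)
  also have "\<dots> = size (filter_mset (\<lambda>x. cmod x < r) (proots F))
                  + size (filter_mset (\<lambda>x. \<not> cmod x < r) (proots F))"
    by (subst multiset_partition[of _ "\<lambda>x. cmod x < r"]) (simp only: size_union)
  finally show ?thesis
    using inner by (simp add: F_def)
qed

subsection \<open>Irreducible factors of primitive integer polynomials\<close>

lemma degree_pos_if_irreducible_dvd_primitive:
  fixes f g :: "int poly"
  assumes "g dvd f" and "irreducible g" and "content f = 1"
  shows "degree g \<noteq> 0"
proof
  assume "degree g = 0"
  then have "g = [:coeff g 0:]"
    using degree_0_id by metis
  moreover from this have "is_unit (coeff g 0)"
    using assms(1,3) const_poly_dvd_iff_dvd_content by metis
  ultimately show False
    using assms(2) irreducible_not_unit is_unit_poly_iff by metis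
qed

lemma abs_lead_coeff_le_if_dvd:
  fixes f g :: "int poly"
  assumes "g dvd f" and "f \<noteq> 0"
  shows "\<bar>lead_coeff g\<bar> \<le> \<bar>lead_coeff f\<bar>"
proof -
  obtain h where fgh: "f = g * h"
    using assms(1) by blast
  then have "1 \<le> \<bar>lead_coeff h\<bar>"
    using assms(2) by (simp add: int_one_le_iff_zero_less)
  then show ?thesis
    using fgh by (simp add: lead_coeff_mult abs_mult mult_le_cancel_left1)
qed

lemma irreducible_factor_has_root_outside_ball:
  fixes f g :: "int poly" and r :: real
  assumes "g dvd f" and "irreducible g" and "content f = 1" and f0: "coeff f 0 \<noteq> 0"
    and "r > 0" and lr: "real_of_int \<bar>lead_coeff f\<bar> * r \<le> 1"
  shows "\<exists>x. poly (map_poly of_int g :: complex poly) x = 0 \<and> \<not> cmod x < r"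
proof (rule ccontr)
  assume inside: "\<not> ?thesis"
  have "f \<noteq> 0"
    using f0 by auto
  have "degree g \<noteq> 0"
    using assms(1-3) by (rule degree_pos_if_irreducible_dvd_primitive)
  have "coeff g 0 \<noteq> 0"
    using f0 \<open>g dvd f\<close> by (auto simp: coeff_mult_0)
  have "real_of_int \<bar>lead_coeff g\<bar> * r \<le> real_of_int \<bar>lead_coeff f\<bar> * r"
    using abs_lead_coeff_le_if_dvd[OF \<open>g dvd f\<close> \<open>f \<noteq> 0\<close>] \<open>r > 0\<close>
    by (intro mult_right_mono) simp_all
  with lr have lgr: "real_of_int \<bar>lead_coeff g\<bar> * r \<le> 1"
    by linarith
  have "1 \<le> \<bar>lead_coeff f\<bar>"
    using \<open>f \<noteq> 0\<close> by (simp add: int_one_le_iff_zero_less)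
  then have "1 * r \<le> real_of_int \<bar>lead_coeff f\<bar> * r"
    using \<open>r > 0\<close> by (intro mult_right_mono) simp_all
  with lr have "r \<le> 1"
    by linarith
  define G where "G = (map_poly of_int g :: complex poly)"
  have "real_of_int \<bar>coeff g 0\<bar> = cmod (poly G 0)"
    by (simp add: G_def poly_0_coeff_0 coeff_map_poly)
  also have "\<dots> < cmod (lead_coeff G) * r ^ degree G"
    using \<open>degree g \<noteq> 0\<close> inside
    by (intro norm_poly_0_less_if_roots_in_ball) (auto simp: G_def degree_map_poly)
  also have "\<dots> \<le> cmod (lead_coeff G) * r"
    using \<open>degree g \<noteq> 0\<close> \<open>r > 0\<close> \<open>r \<le> 1\<close>
    by (intro mult_left_mono power_decreasing[of 1, simplified]) (auto simp: G_def degree_map_poly)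
  also have "\<dots> = real_of_int \<bar>lead_coeff g\<bar> * r"
    by (simp add: G_def degree_map_poly coeff_map_poly)
  finally have "\<bar>coeff g 0\<bar> < 1"
    using lgr by linarith
  then show False
    using \<open>coeff g 0 \<noteq> 0\<close> by linarith
qed

lemma size_le_proots_outside_ball_prod_mset:
  fixes fs :: "int poly multiset" and r :: real
  assumes "\<forall>g\<in>#fs. \<exists>x. poly (map_poly of_int g :: complex poly) x = 0 \<and> \<not> cmod x < r"
    and "prod_mset fs \<noteq> 0"
  shows "size fs \<le> size (filter_mset (\<lambda>x. \<not> cmod x < r)
                      (proots (map_poly of_int (prod_mset fs) :: complex poly)))"
  using assms
proof (induction fs)
  case (add g fs)
  define G where "G = (map_poly of_int g :: complex poly)"
  define Q where "Q = (map_poly of_int (prod_mset fs) :: complex poly)"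
  have "g \<noteq> 0" and "prod_mset fs \<noteq> 0"
    using add.prems by auto
  then have "G \<noteq> 0" and "Q \<noteq> 0"
    by (simp_all add: G_def Q_def)
  obtain x where "poly G x = 0" and "\<not> cmod x < r"
    using add.prems by (auto simp: G_def)
  with \<open>G \<noteq> 0\<close> have "filter_mset (\<lambda>x. \<not> cmod x < r) (proots G) \<noteq> {#}"
    by (metis count_proots count_filter_mset order_root count_empty)
  then have "0 < size (filter_mset (\<lambda>x. \<not> cmod x < r) (proots G))"
    by (simp only: nonempty_has_size)
  moreover have "size fs \<le> size (filter_mset (\<lambda>x. \<not> cmod x < r) (proots Q))"
    using add \<open>prod_mset fs \<noteq> 0\<close> by (simp add: Q_def)
  moreover have "map_poly of_int (prod_mset (add_mset g fs)) = G * Q"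
    by (simp add: G_def Q_def map_poly_of_int_mult)
  ultimately show ?case
    using \<open>G \<noteq> 0\<close> \<open>Q \<noteq> 0\<close> by (simp add: proots_mult Suc_le_eq nonempty_has_size)
qed simp

lemma size_irreducible_factorization_le_proots_outside_ball:
  fixes f :: "int poly" and fs :: "int poly multiset" and r :: real
  assumes "content f = 1" and "coeff f 0 \<noteq> 0"
    and "r > 0" and "real_of_int \<bar>lead_coeff f\<bar> * r \<le> 1"
    and "\<forall>g\<in>#fs. irreducible g" and "prod_mset fs = f"
  shows "size fs \<le> size (filter_mset (\<lambda>x. \<not> cmod x < r)
                      (proots (map_poly of_int f :: complex poly)))"
proof -
  have "\<exists>x. poly (map_poly of_int g :: complex poly) x = 0 \<and> \<not> cmod x < r" if "g \<in># fs" for g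
    using irreducible_factor_has_root_outside_ball[OF _ _ assms(1-4)] dvd_prod_mset[OF that] that
      assms(5,6) by blast
  moreover have "f \<noteq> 0"
    using \<open>coeff f 0 \<noteq> 0\<close> by auto
  ultimately show ?thesis
    using size_le_proots_outside_ball_prod_mset \<open>prod_mset fs = f\<close> by blast
qed

subsection \<open>Factorizations into irreducibles\<close>

lemma irreducible_factorization_exists:
  fixes x :: "'a::factorial_semiring"
  assumes "x \<noteq> 0" and "\<not> is_unit x"
  obtains fs where "fs \<noteq> {#}" and "\<forall>g\<in>#fs. irreducible g" and "prod_mset fs = x"
proof -
  define P where "P = prime_factorization x"
  have assoc: "normalize (prod_mset P) = normalize x"
    using assms(1) by (simp add: P_def prod_mset_prime_factorization_weak)
  then have "prod_mset P \<noteq> 0"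
    using assms(1) by (metis normalize_eq_0_iff)
  obtain u where u: "x = prod_mset P * u"
    using associatedD1[OF assoc] by blast
  then have "prod_mset P * u dvd prod_mset P * 1"
    using associatedD2[OF assoc] by simp
  then have "is_unit u"
    using \<open>prod_mset P \<noteq> 0\<close> dvd_times_left_cancel_iff by blast
  have "P \<noteq> {#}"
    using assms(2) \<open>is_unit u\<close> u by (metis prod_mset.empty mult_1)
  then obtain p where p: "p \<in># P"
    by blast
  have irr: "irreducible q" if "q \<in># P" for q
    using that unfolding P_def
    by (rule prime_elem_imp_irreducible[OF prime_imp_prime_elem[OF in_prime_factors_imp_prime]])
  define fs where "fs = add_mset (u * p) (P - {#p#})"
  have "\<forall>g\<in>#fs. irreducible g"
    using irr p \<open>is_unit u\<close> by (auto simp: fs_def irreducible_mult_unit_left dest: in_diffD)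
  moreover have "prod_mset fs = x"
  proof -
    have "prod_mset fs = u * (p * prod_mset (P - {#p#}))"
      by (simp add: fs_def mult.assoc)
    also have "p * prod_mset (P - {#p#}) = prod_mset P"
      using p by (rule prod_mset.remove[symmetric])
    finally show ?thesis
      using u by (simp add: mult.commute)
  qed
  moreover have "fs \<noteq> {#}"
    by (simp add: fs_def)
  ultimately show ?thesis
    using that by blast
qed

lemma irreducible_if_irreducible_factorizations_le_1:
  fixes x :: "'a::factorial_semiring"
  assumes "x \<noteq> 0" and "\<not> is_unit x"
    and small: "\<And>fs. \<forall>g\<in>#fs. irreducible g \<Longrightarrow> prod_mset fs = x \<Longrightarrow> size fs \<le> 1"
  shows "irreducible x"
proof (rule irreducibleI[OF assms(1,2)])
  fix a b
  assume "x = a * b"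
  show "is_unit a \<or> is_unit b"
  proof (rule ccontr)
    assume "\<not> (is_unit a \<or> is_unit b)"
    moreover have "a \<noteq> 0" and "b \<noteq> 0"
      using \<open>x = a * b\<close> \<open>x \<noteq> 0\<close> by auto
    ultimately obtain as bs
      where "as \<noteq> {#}" "\<forall>g\<in>#as. irreducible g" "prod_mset as = a"
        and "bs \<noteq> {#}" "\<forall>g\<in>#bs. irreducible g" "prod_mset bs = b"
      using irreducible_factorization_exists[of a] irreducible_factorization_exists[of b]
      by (metis (no_types))
    then have "size (as + bs) \<le> 1"
      using small[of "as + bs"] \<open>x = a * b\<close> by auto
    with \<open>as \<noteq> {#}\<close> \<open>bs \<noteq> {#}\<close> show False
      by (simp add: Suc_le_eq nonempty_has_size)
  qed
qed

theorem corollary6: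
  fixes f :: "int poly" and m j :: nat
  assumes "m \<ge> 2"
    and "degree f = m"
    and "content f = 1"
    and "coeff f 0 * coeff f m \<noteq> 0"
    and "j \<le> m - 1"
    and "real_of_int \<bar>coeff f j\<bar> >
           real_of_int \<bar>coeff f (j+1)\<bar> / real_of_int \<bar>coeff f m\<bar>
           + (\<Sum>i<j. real_of_int \<bar>coeff f i\<bar> * real_of_int \<bar>coeff f m\<bar> ^ (j - i))
           + (\<Sum>i\<in>{j+2..m}. real_of_int \<bar>coeff f i\<bar> / real_of_int \<bar>coeff f m\<bar> ^ (i - j))"
  shows "(\<exists>fs :: int poly multiset. (\<forall>g \<in># fs. irreducible g) \<and> prod_mset fs = f \<and> size fs \<le> m - j)
         \<and> (j = m - 1 \<longrightarrow> irreducible f)"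
proof -
  define r where "r = 1 / real_of_int \<bar>coeff f m\<bar>"
  have f0: "coeff f 0 \<noteq> 0" and am: "coeff f m \<noteq> 0"
    using assms(4) by auto
  have "f \<noteq> 0" and "\<not> is_unit f"
    using am assms(1,2) by (auto simp: is_unit_poly_iff)
  have "j < m"
    using assms(1,5) by linarith
  have "r > 0" and "real_of_int \<bar>lead_coeff f\<bar> * r \<le> 1"
    using am assms(2) by (simp_all add: r_def)
  have bound: "size fs \<le> m - j" if "\<forall>g\<in>#fs. irreducible g" and "prod_mset fs = f" for fs
    using size_irreducible_factorization_le_proots_outside_ball[OF assms(3) f0 \<open>r > 0\<close> _ that]
      size_proots_outside_ball_if_dominant_coeff[OF assms(2) \<open>j < m\<close> am assms(6)]
      \<open>real_of_int \<bar>lead_coeff f\<bar> * r \<le> 1\<close>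
    by (simp add: r_def)
  obtain fs where "\<forall>g\<in>#fs. irreducible g" and "prod_mset fs = f"
    using irreducible_factorization_exists[OF \<open>f \<noteq> 0\<close> \<open>\<not> is_unit f\<close>] by blast
  moreover have "irreducible f" if "j = m - 1"
    using irreducible_if_irreducible_factorizations_le_1[OF \<open>f \<noteq> 0\<close> \<open>\<not> is_unit f\<close>] bound that
      \<open>j < m\<close> by fastforce
  ultimately show ?thesis
    using bound by blast
qed

end
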